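(* Let $T:[a,b]\times[c,d]\to\mathbb{R}$ be the function constructed from a generating function $\phi$ as described in the context. If $\phi$ is of bounded variation in the sense of Arzelà on $[a_0,a_1]\times[c,d]$, then $\dim_H(G(T))=2$.
   Context: Let $a<b$, $c<d$. Set $a_0=a$ and $a_n=a+(b-a)(\tfrac12+\tfrac14+\dots+\tfrac1{2^n})$ for $n\in\mathbb{N}$, so $a_n\uparrow b$. Let $\phi:[a_0,a_1]\times[c,d]\to\mathbb{R}$ be continuous with $\phi(a_0,y)=\phi(a_1,y)$ for all $y\in[c,d]$ (the generating function). For $n\ge1$ let $\psi_n:[a_{n-1},a_n]\to[a_0,a_1]$ be the increasing affine bijection $\psi_n(x)=\frac{2^n[(a_1-a_0)x+a_0a_n-a_1a_{n-1}]}{b-a}$. Let $F_1=\phi$ on $[a_0,a_1]\times[c,d]$ and for $n\ge2$, $F_n(x,y)=\frac1n\phi(\psi_n(x),y)+\frac{n-1}{n}\phi(a_0,y)$ for $(x,y)\in[a_{n-1},a_n]\times[c,d]$. Define $T_n(x,y)=F_k(x,y)$ for $(x,y)\in[a_{k-1},a_k]\times[c,d]$, $k=1,\dots,n$, and $T_n(x,y)=F_n(a_n,y)$ for $(x,y)\in[a_n,b]\times[c,d]$; and $T(x,y)=\lim_{n\to\infty}T_n(x,y)$. Bounded variation in the sense of Arzelà on $[a_0,a_1]\times[c,d]$: there is $K$ such that for all $m$ and all $a_0=x_0\le\dots\le x_m=a_1$, $c=y_0\le\dots\le y_m=d$, $\sum_{i=0}^{m-1}|\phi(x_{i+1},y_{i+1})-\phi(x_i,y_i)|\le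 K$. $G(T)=\{(x,y,T(x,y))\}\subset\mathbb{R}^3$; $\dim_H$ is Hausdorff dimension. *)

theory Defs
  imports "HOL-Analysis.Analysis"
begin

definition hausdorff_measure :: "real \<Rightarrow> 'a::metric_space set \<Rightarrow> ennreal" where
  "hausdorff_measure s E =
     (SUP \<delta>\<in>{0<..}. INF U\<in>{U :: nat \<Rightarrow> 'a set.
         (\<forall>i. bounded (U i) \<and> diameter (U i) \<le> \<delta>) \<and> E \<subseteq> (\<Union>i. U i)}.
        (\<Sum>i. ennreal (diameter (U i) powr s)))"

definition hausdorff_dim :: "'a::metric_space set \<Rightarrow> real" where
  "hausdorff_dim E = Inf {s. s > 0 \<and> hausdorff_measure s E = 0}"

definition seq_a :: "real \<Rightarrow> real \<Rightarrow> nat \<Rightarrow> real" where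
  "seq_a a b n = a + (b - a) * (\<Sum>k=1..n. 1 / 2 ^ k)"

definition psi :: "real \<Rightarrow> real \<Rightarrow> nat \<Rightarrow> real \<Rightarrow> real" where
  "psi a b n x = 2 ^ n * ((seq_a a b 1 - seq_a a b 0) * x + seq_a a b 0 * seq_a a b n
                   - seq_a a b 1 * seq_a a b (n - 1)) / (b - a)"

definition Fn :: "real \<Rightarrow> real \<Rightarrow> (real \<Rightarrow> real \<Rightarrow> real) \<Rightarrow> nat \<Rightarrow> real \<Rightarrow> real \<Rightarrow> real" where
  "Fn a b \<phi> n x y = (if n = 1 then \<phi> x y
      else (1 / real n) * \<phi> (psi a b n x) y + (real n - 1) / real n * \<phi> (seq_a a b 0) y)"

text \<open>T_n(x,y) = F_k(x,y) on [a_{k-1},a_k] (k = 1..n), and F_n(a_n,y) on [a_n,b].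
  On the common endpoints a_k the adjacent pieces agree; we pick the least k.\<close>
definition Tn :: "real \<Rightarrow> real \<Rightarrow> (real \<Rightarrow> real \<Rightarrow> real) \<Rightarrow> nat \<Rightarrow> real \<Rightarrow> real \<Rightarrow> real" where
  "Tn a b \<phi> n x y = (if x < seq_a a b n
      then Fn a b \<phi> (LEAST k. 1 \<le> k \<and> x \<le> seq_a a b k) x y
      else Fn a b \<phi> n (seq_a a b n) y)"

definition Tlim :: "real \<Rightarrow> real \<Rightarrow> (real \<Rightarrow> real \<Rightarrow> real) \<Rightarrow> real \<Rightarrow> real \<Rightarrow> real" where
  "Tlim a b \<phi> x y = lim (\<lambda>n. Tn a b \<phi> n x y)"

definition graph_T :: "real \<Rightarrow> real \<Rightarrow> real \<Rightarrow> real \<Rightarrow> (real \<Rightarrow> real \<Rightarrow> real) \<Rightarrow> (real \<times> real \<times> real) set" where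
  "graph_T a b c d \<phi> = {(x, y, Tlim a b \<phi> x y) | x y. x \<in> {a..b} \<and> y \<in> {c..d}}"

definition arzela_bv :: "(real \<Rightarrow> real \<Rightarrow> real) \<Rightarrow> real \<Rightarrow> real \<Rightarrow> real \<Rightarrow> real \<Rightarrow> bool" where
  "arzela_bv \<phi> x0 x1 c d \<longleftrightarrow> (\<exists>K. \<forall>m (xs :: nat \<Rightarrow> real) (ys :: nat \<Rightarrow> real).
      xs 0 = x0 \<and> xs m = x1 \<and> ys 0 = c \<and> ys m = d \<and>
      (\<forall>i<m. xs i \<le> xs (Suc i) \<and> ys i \<le> ys (Suc i)) \<longrightarrow>
      (\<Sum>i<m. \<bar>\<phi> (xs (Suc i)) (ys (Suc i)) - \<phi> (xs i) (ys i)\<bar>) \<le> K)"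

end

theory Submission
  imports Defs
begin

text \<open>
  The graph lies above the rectangle \<open>[a, b] \<times> [c, d]\<close> and projecting to the plane does not
  increase diameters, so for \<open>s \<le> 2\<close> every cover of the graph by sets of diameter at most 1
  has \<open>s\<close>-content at least a quarter of the area of the rectangle: the dimension is at least 2.

  Conversely, \<open>T\<close> is glued from countably many pieces: \<open>F\<^sub>n\<close> on \<open>[a\<^sub>n\<^sub>-\<^sub>1, a\<^sub>n] \<times> [c, d]\<close>,
  a convex combination of \<open>\<phi>\<close> composed with monotone affine maps, and \<open>\<phi>(a, \<cdot>)\<close> on the edge
  \<open>x = b\<close>, where the periodicity of \<open>\<phi>\<close> makes all \<open>T\<^sub>n\<close> agree. Each piece is continuous with
  Arzela variation at most that of \<open>\<phi>\<close>. For such a function on a rectangle cut into an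
  \<open>N \<times> N\<close> grid, the cells along a diagonal form a monotone staircase, so the oscillations of
  the function over all cells add up to \<open>O(N)\<close>. Its graph is therefore covered by \<open>O(N\<^sup>2)\<close>
  cubes of side \<open>O(1/N)\<close>, whose \<open>s\<close>-content tends to 0 for \<open>s > 2\<close>. A countable union of
  \<open>H\<^sup>s\<close>-null sets is \<open>H\<^sup>s\<close>-null, so the dimension is at most 2.
\<close>

section \<open>Hausdorff-null sets\<close>

definition hausdorff_null :: "real \<Rightarrow> 'a::metric_space set \<Rightarrow> bool" where
  "hausdorff_null s E \<longleftrightarrow> (\<forall>\<delta>>0. \<forall>e>0. \<exists>U::nat \<Rightarrow> 'a set. (\<forall>i. bounded (U i) \<and> diameter (U i) \<le> \<delta>)
      \<and> E \<subseteq> (\<Union>i. U i) \<and> (\<Sum>i. ennreal (diameter (U i) powr s)) \<le> ennreal e)"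

lemma hausdorff_null_imp_measure_eq_0:
  assumes "hausdorff_null s E"
  shows "hausdorff_measure s E = 0"
proof -
  have "(INF U\<in>{U :: nat \<Rightarrow> 'a set.
         (\<forall>i. bounded (U i) \<and> diameter (U i) \<le> \<delta>) \<and> E \<subseteq> (\<Union>i. U i)}.
        (\<Sum>i. ennreal (diameter (U i) powr s))) \<le> 0" if "\<delta> > 0" for \<delta>
  proof (rule ennreal_le_epsilon)
    fix e :: real assume "0 < e"
    with assms \<open>\<delta> > 0\<close> obtain U where U: "\<forall>i. bounded (U i) \<and> diameter (U i) \<le> \<delta>"
      "E \<subseteq> (\<Union>i. U i)" "(\<Sum>i. ennreal (diameter (U i) powr s)) \<le> ennreal e"
      unfolding hausdorff_null_def by metis
    then show "(INF U\<in>{U :: nat \<Rightarrow> 'a set.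
         (\<forall>i. bounded (U i) \<and> diameter (U i) \<le> \<delta>) \<and> E \<subseteq> (\<Union>i. U i)}.
        (\<Sum>i. ennreal (diameter (U i) powr s))) \<le> 0 + ennreal e"
      by (intro INF_lower2[of U]) auto
  qed
  then show ?thesis
    unfolding hausdorff_measure_def by (intro antisym SUP_least) simp_all
qed

lemma hausdorff_null_subset:
  assumes "hausdorff_null s E" "F \<subseteq> E"
  shows "hausdorff_null s F"
  using assms unfolding hausdorff_null_def by (meson order_trans)

lemma hausdorff_null_UN:
  fixes E :: "nat \<Rightarrow> 'a::metric_space set"
  assumes "\<And>n. hausdorff_null s (E n)"
  shows "hausdorff_null s (\<Union>n. E n)"
  unfolding hausdorff_null_def
proof (intro allI impI)
  fix \<delta> e :: real assume "\<delta> > 0" "e > 0"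
  have "\<forall>n. \<exists>U::nat \<Rightarrow> 'a set. (\<forall>i. bounded (U i) \<and> diameter (U i) \<le> \<delta>)
      \<and> E n \<subseteq> (\<Union>i. U i) \<and> (\<Sum>i. ennreal (diameter (U i) powr s)) \<le> ennreal (e / 2 ^ Suc n)"
    using assms \<open>\<delta> > 0\<close> \<open>e > 0\<close> unfolding hausdorff_null_def by simp
  then obtain U where U: "\<And>n. \<forall>i. bounded (U n i) \<and> diameter (U n i) \<le> \<delta>"
    "\<And>n. E n \<subseteq> (\<Union>i. U n i)"
    "\<And>n. (\<Sum>i. ennreal (diameter (U n i) powr s)) \<le> ennreal (e / 2 ^ Suc n)"
    by metis
  have geom: "(\<lambda>n. e / 2 ^ Suc n) sums e"
    using sums_mult[OF power_half_series, of e] by (simp add: power_one_over)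
  define V where "V i = U (fst (prod_decode i)) (snd (prod_decode i))" for i
  have "(\<Sum>i. ennreal (diameter (V i) powr s))
      = (\<Sum>i. (\<lambda>(n, m). ennreal (diameter (U n m) powr s)) (prod_decode i))"
    unfolding V_def by (simp only: case_prod_beta)
  also have "\<dots> = (\<Sum>n. \<Sum>m. ennreal (diameter (U n m) powr s))"
    by (rule suminf_ennreal_2dimen) (simp only: case_prod_conv)
  also have "\<dots> \<le> (\<Sum>n. ennreal (e / 2 ^ Suc n))"
    by (rule suminf_le[OF U(3) summableI summableI])
  also have "\<dots> = ennreal e"
    using \<open>e > 0\<close> geom by (simp add: suminf_ennreal2 sums_summable sums_iff)
  finally have "(\<Sum>i. ennreal (diameter (V i) powr s)) \<le> ennreal e" .
  moreover have "(\<Union>n. E n) \<subseteq> (\<Union>i. V i)"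
  proof
    fix x assume "x \<in> (\<Union>n. E n)"
    then obtain n m where "x \<in> U n m" using U(2) by blast
    then have "x \<in> V (prod_encode (n, m))" by (simp add: V_def)
    then show "x \<in> (\<Union>i. V i)" by blast
  qed
  moreover have "\<forall>i. bounded (V i) \<and> diameter (V i) \<le> \<delta>" using U(1) by (simp add: V_def)
  ultimately show "\<exists>U::nat \<Rightarrow> 'a set. (\<forall>i. bounded (U i) \<and> diameter (U i) \<le> \<delta>)
      \<and> (\<Union>n. E n) \<subseteq> (\<Union>i. U i) \<and> (\<Sum>i. ennreal (diameter (U i) powr s)) \<le> ennreal e"
    by blast
qed

lemma hausdorff_null_Un:
  assumes "hausdorff_null s A" "hausdorff_null s B"
  shows "hausdorff_null s (A \<union> B)"
proof -
  have "A \<union> B = (\<Union>n. case_nat A (\<lambda>_. B) n)"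
  proof
    have "A = case_nat A (\<lambda>_. B) 0" "B = case_nat A (\<lambda>_. B) 1" by simp_all
    then show "A \<union> B \<subseteq> (\<Union>n. case_nat A (\<lambda>_. B) n)" by (metis UN_upper UNIV_I Un_least)
  qed (auto split: nat.split_asm)
  then show ?thesis using assms by (simp add: hausdorff_null_UN split: nat.split)
qed

lemma hausdorff_null_finite_coverI:
  fixes E :: "'a::metric_space set"
  assumes "\<And>\<delta> e. \<delta> > 0 \<Longrightarrow> e > 0 \<Longrightarrow> \<exists>F. finite F \<and> E \<subseteq> \<Union>F
      \<and> (\<forall>A\<in>F. bounded A \<and> diameter A \<le> \<delta>) \<and> (\<Sum>A\<in>F. diameter A powr s) \<le> e"
  shows "hausdorff_null s E"
  unfolding hausdorff_null_def
proof (intro allI impI)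
  fix \<delta> e :: real assume "\<delta> > 0" "e > 0"
  then obtain F where F: "finite F" "E \<subseteq> \<Union>F" "\<forall>A\<in>F. bounded A \<and> diameter A \<le> \<delta>"
      "(\<Sum>A\<in>F. diameter A powr s) \<le> e"
    using assms by metis
  obtain xs where xs: "set xs = F" "distinct xs" using finite_distinct_list[OF F(1)] by blast
  define U where "U i = (if i < length xs then xs ! i else {})" for i
  have "(\<Sum>i. ennreal (diameter (U i) powr s)) = (\<Sum>i<length xs. ennreal (diameter (U i) powr s))"
    by (rule suminf_finite) (auto simp: U_def)
  also have "\<dots> = ennreal (\<Sum>i<length xs. diameter (xs ! i) powr s)"
    by (subst sum_ennreal) (auto simp: U_def)
  also have "(\<Sum>i<length xs. diameter (xs ! i) powr s) = sum_list (map (\<lambda>A. diameter A powr s) xs)"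
    by (simp add: sum_list_sum_nth atLeast0LessThan)
  also have "\<dots> = (\<Sum>A\<in>F. diameter A powr s)"
    using xs by (metis sum.distinct_set_conv_list)
  finally have "(\<Sum>i. ennreal (diameter (U i) powr s)) \<le> ennreal e"
    using F(4) by (simp add: ennreal_leI)
  moreover have "E \<subseteq> (\<Union>i. U i)"
  proof
    fix x assume "x \<in> E"
    then obtain A where "A \<in> F" "x \<in> A" using F(2) by blast
    then obtain i where "i < length xs" "xs ! i = A" using xs by (metis in_set_conv_nth)
    then show "x \<in> (\<Union>i. U i)" using \<open>x \<in> A\<close> by (auto simp: U_def)
  qed
  moreover have "\<forall>i. bounded (U i) \<and> diameter (U i) \<le> \<delta>"
    using F(3) xs \<open>\<delta> > 0\<close> by (auto simp: U_def)
  ultimately show "\<exists>U::nat \<Rightarrow> 'a set. (\<forall>i. bounded (U i) \<and> diameter (U i) \<le> \<delta>)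
      \<and> E \<subseteq> (\<Union>i. U i) \<and> (\<Sum>i. ennreal (diameter (U i) powr s)) \<le> ennreal e"
    by blast
qed

lemma hausdorff_dim_eqI:
  assumes "0 < t"
    and null: "\<And>s. t < s \<Longrightarrow> hausdorff_measure s E = 0"
    and nonnull: "\<And>s. 0 < s \<Longrightarrow> s < t \<Longrightarrow> hausdorff_measure s E \<noteq> 0"
  shows "hausdorff_dim E = t"
proof -
  define S where "S = {s. s > 0 \<and> hausdorff_measure s E = 0}"
  have lower: "t \<le> s" if "s \<in> S" for s
    using nonnull that unfolding S_def by force
  have "t + 1 \<in> S" using assms by (simp add: S_def)
  then have "t \<le> Inf S" by (intro cInf_greatest lower) auto
  moreover have "Inf S \<le> t"
  proof (rule ccontr)
    assume "\<not> Inf S \<le> t"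
    then have "(Inf S + t) / 2 \<in> S" using assms by (simp add: S_def)
    then have "Inf S \<le> (Inf S + t) / 2" using lower by (intro cInf_lower bdd_belowI)
    with \<open>\<not> Inf S \<le> t\<close> show False by simp
  qed
  ultimately show ?thesis unfolding hausdorff_dim_def S_def by simp
qed

section \<open>Variation along monotone chains\<close>

text \<open>Arzela's bounded variation, except that the monotone chains need not join the corners
  of \<open>R\<close>; unlike Arzela's notion it passes to subsets and to monotone reparametrisations.\<close>
definition chain_variation_le :: "(real \<times> real \<Rightarrow> real) \<Rightarrow> (real \<times> real) set \<Rightarrow> real \<Rightarrow> bool" where
  "chain_variation_le g R K \<longleftrightarrow> (\<forall>m (z::nat \<Rightarrow> real \<times> real). (\<forall>i\<le>m. z i \<in> R) \<and>
      (\<forall>i<m. fst (z i) \<le> fst (z (Suc i)) \<and> snd (z i) \<le> snd (z (Suc i))) \<longrightarrow>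
      (\<Sum>i<m. \<bar>g (z (Suc i)) - g (z i)\<bar>) \<le> K)"

lemma chain_variation_leD:
  assumes "chain_variation_le g R K" "\<And>i. i \<le> m \<Longrightarrow> z i \<in> R"
    "\<And>i. i < m \<Longrightarrow> fst (z i) \<le> fst (z (Suc i)) \<and> snd (z i) \<le> snd (z (Suc i))"
  shows "(\<Sum>i<m. \<bar>g (z (Suc i)) - g (z i)\<bar>) \<le> K"
  using assms unfolding chain_variation_le_def by blast

lemma chain_variation_le_nonneg:
  assumes "chain_variation_le g R K" "R \<noteq> {}"
  shows "0 \<le> K"
proof -
  obtain r where "r \<in> R" using assms(2) by blast
  have "(\<Sum>i<0. \<bar>g ((\<lambda>_. r) (Suc i)) - g ((\<lambda>_. r) i)\<bar>) \<le> K"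
    by (rule chain_variation_leD[OF assms(1)]) (use \<open>r \<in> R\<close> in auto)
  then show "0 \<le> K" by simp
qed

lemma arzela_bv_imp_chain_variation_le:
  assumes "arzela_bv \<phi> p q c d"
  shows "\<exists>K. chain_variation_le (\<lambda>(x, y). \<phi> x y) ({p..q} \<times> {c..d}) K"
proof -
  obtain K where K: "\<And>m xs ys. xs 0 = p \<Longrightarrow> xs m = q \<Longrightarrow> ys 0 = c \<Longrightarrow> ys m = d \<Longrightarrow>
      (\<forall>i<m. xs i \<le> xs (Suc i) \<and> ys i \<le> ys (Suc i)) \<Longrightarrow>
      (\<Sum>i<m. \<bar>\<phi> (xs (Suc i)) (ys (Suc i)) - \<phi> (xs i) (ys i)\<bar>) \<le> K"
    using assms unfolding arzela_bv_def by blast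
  have "chain_variation_le (\<lambda>(x, y). \<phi> x y) ({p..q} \<times> {c..d}) K"
    unfolding chain_variation_le_def
  proof (intro allI impI, elim conjE)
    fix m and z :: "nat \<Rightarrow> real \<times> real"
    assume z_in: "\<forall>i\<le>m. z i \<in> {p..q} \<times> {c..d}"
      and z_mono: "\<forall>i<m. fst (z i) \<le> fst (z (Suc i)) \<and> snd (z i) \<le> snd (z (Suc i))"
    \<comment> \<open>Extend the chain by the corners \<open>(p, c)\<close> and \<open>(q, d)\<close>, as Arzela's definition requires.\<close>
    define w where "w i = (if i = 0 then (p, c) else if i \<le> Suc m then z (i - 1) else (q, d))" for i
    define f where "f i = \<bar>\<phi> (fst (w (Suc i))) (snd (w (Suc i))) - \<phi> (fst (w i)) (snd (w i))\<bar>" for i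
    have w_mono: "fst (w i) \<le> fst (w (Suc i)) \<and> snd (w i) \<le> snd (w (Suc i))"
      if i: "i < Suc (Suc m)" for i
    proof -
      consider "i = 0" | "0 < i" "i \<le> m" | "i = Suc m" using i by linarith
      then show ?thesis
      proof cases
        case 1 then show ?thesis using z_in by (auto simp: w_def mem_Times_iff)
      next
        case 2 then show ?thesis using z_mono[rule_format, of "i - 1"] by (simp add: w_def)
      next
        case 3 then show ?thesis using z_in by (auto simp: w_def mem_Times_iff)
      qed
    qed
    have "(\<Sum>i<m. \<bar>(\<lambda>(x, y). \<phi> x y) (z (Suc i)) - (\<lambda>(x, y). \<phi> x y) (z i)\<bar>) = (\<Sum>i\<in>Suc ` {..<m}. f i)"
      by (simp add: sum.reindex f_def w_def case_prod_beta)
    also have "\<dots> \<le> (\<Sum>i<Suc (Suc m). f i)"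
      by (intro sum_mono2) (auto simp: f_def)
    also have "\<dots> \<le> K"
      unfolding f_def by (rule K) (use w_mono in \<open>simp_all add: w_def\<close>)
    finally show "(\<Sum>i<m. \<bar>(\<lambda>(x, y). \<phi> x y) (z (Suc i)) - (\<lambda>(x, y). \<phi> x y) (z i)\<bar>) \<le> K" .
  qed
  then show ?thesis by blast
qed

lemma chain_variation_le_compose:
  assumes bv: "chain_variation_le f R K" and maps: "h ` S \<subseteq> R"
    and mono: "\<And>z z'. z \<in> S \<Longrightarrow> z' \<in> S \<Longrightarrow> fst z \<le> fst z' \<Longrightarrow> snd z \<le> snd z' \<Longrightarrow>
      fst (h z) \<le> fst (h z') \<and> snd (h z) \<le> snd (h z')"
  shows "chain_variation_le (f \<circ> h) S K"
  unfolding chain_variation_le_def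
proof (intro allI impI, elim conjE)
  fix m and z :: "nat \<Rightarrow> real \<times> real"
  assume z: "\<forall>i\<le>m. z i \<in> S" "\<forall>i<m. fst (z i) \<le> fst (z (Suc i)) \<and> snd (z i) \<le> snd (z (Suc i))"
  have "(\<Sum>i<m. \<bar>f ((h \<circ> z) (Suc i)) - f ((h \<circ> z) i)\<bar>) \<le> K"
  proof (rule chain_variation_leD[OF bv])
    show "(h \<circ> z) i \<in> R" if "i \<le> m" for i
      using z(1) maps that by auto
    show "fst ((h \<circ> z) i) \<le> fst ((h \<circ> z) (Suc i)) \<and> snd ((h \<circ> z) i) \<le> snd ((h \<circ> z) (Suc i))"
      if "i < m" for i
      using z that by (simp add: mono)
  qed
  then show "(\<Sum>i<m. \<bar>(f \<circ> h) (z (Suc i)) - (f \<circ> h) (z i)\<bar>) \<le> K" by simp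
qed

lemma chain_variation_le_lincomb:
  assumes f: "chain_variation_le f R K" and g: "chain_variation_le g R L"
    and "0 \<le> l" "0 \<le> l'"
  shows "chain_variation_le (\<lambda>z. l * f z + l' * g z) R (l * K + l' * L)"
  unfolding chain_variation_le_def
proof (intro allI impI, elim conjE)
  fix m and z :: "nat \<Rightarrow> real \<times> real"
  assume z: "\<forall>i\<le>m. z i \<in> R" "\<forall>i<m. fst (z i) \<le> fst (z (Suc i)) \<and> snd (z i) \<le> snd (z (Suc i))"
  have "(\<Sum>i<m. \<bar>(l * f (z (Suc i)) + l' * g (z (Suc i))) - (l * f (z i) + l' * g (z i))\<bar>)
      \<le> (\<Sum>i<m. l * \<bar>f (z (Suc i)) - f (z i)\<bar> + l' * \<bar>g (z (Suc i)) - g (z i)\<bar>)"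
  proof (rule sum_mono)
    fix i
    have "\<bar>(l * f (z (Suc i)) + l' * g (z (Suc i))) - (l * f (z i) + l' * g (z i))\<bar>
        = \<bar>l * (f (z (Suc i)) - f (z i)) + l' * (g (z (Suc i)) - g (z i))\<bar>"
      by (simp add: algebra_simps)
    also have "\<dots> \<le> l * \<bar>f (z (Suc i)) - f (z i)\<bar> + l' * \<bar>g (z (Suc i)) - g (z i)\<bar>"
      using assms(3,4) by (metis abs_mult abs_of_nonneg abs_triangle_ineq)
    finally show "\<bar>(l * f (z (Suc i)) + l' * g (z (Suc i))) - (l * f (z i) + l' * g (z i))\<bar>
        \<le> l * \<bar>f (z (Suc i)) - f (z i)\<bar> + l' * \<bar>g (z (Suc i)) - g (z i)\<bar>" .
  qed
  also have "\<dots> = l * (\<Sum>i<m. \<bar>f (z (Suc i)) - f (z i)\<bar>) + l' * (\<Sum>i<m. \<bar>g (z (Suc i)) - g (z i)\<bar>)"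
    by (simp add: sum.distrib sum_distrib_left)
  also have "\<dots> \<le> l * K + l' * L"
    using z assms(3,4) by (intro add_mono mult_left_mono chain_variation_leD[OF f]
        chain_variation_leD[OF g]) auto
  finally show "(\<Sum>i<m. \<bar>(l * f (z (Suc i)) + l' * g (z (Suc i))) - (l * f (z i) + l' * g (z i))\<bar>)
      \<le> l * K + l' * L" .
qed

lemma chain_variation_le_staircase_sum:
  fixes P Q :: "nat \<Rightarrow> real \<times> real" and lo hi :: nat
  assumes bv: "chain_variation_le g R K" and le: "lo \<le> hi"
    and PR: "\<And>i. lo \<le> i \<Longrightarrow> i \<le> hi \<Longrightarrow> P i \<in> R"
    and QR: "\<And>i. lo \<le> i \<Longrightarrow> i < hi \<Longrightarrow> Q i \<in> R"
    and PQ: "\<And>i. lo \<le> i \<Longrightarrow> i < hi \<Longrightarrow> fst (P i) \<le> fst (Q i) \<and> snd (P i) \<le> snd (Q i)"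
    and QP: "\<And>i. lo \<le> i \<Longrightarrow> i < hi \<Longrightarrow> fst (Q i) \<le> fst (P (Suc i)) \<and> snd (Q i) \<le> snd (P (Suc i))"
  shows "(\<Sum>i\<in>{lo..<hi}. \<bar>g (Q i) - g (P i)\<bar>) \<le> K"
proof -
  define n where "n = hi - lo"
  define z where "z k = (if even k then P (lo + k div 2) else Q (lo + k div 2))" for k
  define f where "f k = \<bar>g (z (Suc k)) - g (z k)\<bar>" for k
  have zR: "z k \<in> R" if "k \<le> 2 * n" for k
  proof (cases "even k")
    case True
    have "lo + k div 2 \<le> hi" using that le unfolding n_def by presburger
    then show ?thesis using True by (auto simp: z_def intro!: PR)
  next
    case False
    then have "k div 2 < n" using that by presburger
    then show ?thesis using False by (auto simp: z_def n_def intro!: QR)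
  qed
  have zmono: "fst (z k) \<le> fst (z (Suc k)) \<and> snd (z k) \<le> snd (z (Suc k))" if "k < 2 * n" for k
  proof (cases "even k")
    case True
    then have "Suc k div 2 = k div 2" "k div 2 < n" using that by presburger+
    then show ?thesis using True PQ[of "lo + k div 2"] by (simp add: z_def n_def)
  next
    case False
    then have "Suc k div 2 = Suc (k div 2)" "k div 2 < n" using that by presburger+
    then show ?thesis using False QP[of "lo + k div 2"] by (simp add: z_def n_def)
  qed
  have "(\<Sum>i\<in>{lo..<hi}. \<bar>g (Q i) - g (P i)\<bar>) = (\<Sum>l<n. f (2 * l))"
  proof -
    have "(\<Sum>i\<in>{lo..<hi}. \<bar>g (Q i) - g (P i)\<bar>) = (\<Sum>l<n. \<bar>g (Q (lo + l)) - g (P (lo + l))\<bar>)"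
      using le by (intro sum.reindex_bij_witness[of _ "\<lambda>l. lo + l" "\<lambda>i. i - lo"]) (auto simp: n_def)
    also have "\<dots> = (\<Sum>l<n. f (2 * l))" by (simp add: f_def z_def)
    finally show ?thesis .
  qed
  also have "\<dots> = (\<Sum>k\<in>(\<lambda>l. 2 * l) ` {..<n}. f k)"
    by (simp add: sum.reindex inj_on_def)
  also have "\<dots> \<le> (\<Sum>k<2 * n. f k)"
    by (intro sum_mono2) (auto simp: f_def)
  also have "\<dots> \<le> K"
    unfolding f_def by (rule chain_variation_leD[OF bv]) (simp_all add: zR zmono)
  finally show ?thesis .
qed

lemma sum_square_le_sum_diagonals:
  fixes M :: "nat \<Rightarrow> nat \<Rightarrow> real" and N :: nat and K :: real
  assumes M0: "\<And>i j. 0 \<le> M i j"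
    and diag: "\<And>r. r < 2 * N \<Longrightarrow>
      (\<Sum>i<N. (if N \<le> i + r \<and> i + r < 2 * N then M i (i + r - N) else 0)) \<le> K"
  shows "(\<Sum>i<N. \<Sum>j<N. M i j) \<le> 2 * N * K"
proof -
  define D where "D i r = (if N \<le> i + r \<and> i + r < 2 * N then M i (i + r - N) else 0)" for i r
  have "(\<Sum>j<N. M i j) \<le> (\<Sum>r<2 * N. D i r)" if "i < N" for i
  proof -
    have inj: "inj_on (\<lambda>j. j + N - i) {..<N}" using that by (auto simp: inj_on_def)
    have "(\<Sum>j<N. M i j) = (\<Sum>j<N. D i (j + N - i))"
      using that by (intro sum.cong refl) (auto simp: D_def)
    also have "\<dots> = (\<Sum>r\<in>(\<lambda>j. j + N - i) ` {..<N}. D i r)"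
      by (simp add: sum.reindex[OF inj])
    also have "\<dots> \<le> (\<Sum>r<2 * N. D i r)"
      using that by (intro sum_mono2) (auto simp: D_def M0)
    finally show ?thesis .
  qed
  then have "(\<Sum>i<N. \<Sum>j<N. M i j) \<le> (\<Sum>i<N. \<Sum>r<2 * N. D i r)"
    by (intro sum_mono) auto
  also have "\<dots> = (\<Sum>r<2 * N. \<Sum>i<N. D i r)" by (rule sum.swap)
  also have "\<dots> \<le> (\<Sum>r<2 * N. K)"
    by (intro sum_mono) (use diag in \<open>simp add: D_def\<close>)
  also have "\<dots> = 2 * N * K" by simp
  finally show ?thesis .
qed

text \<open>Along each of the \<open>2N\<close> diagonals of an \<open>N \<times> N\<close> grid the cells form a monotone staircase,
  so the increments of \<open>g\<close> inside these cells add up to at most \<open>K\<close>.\<close>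
lemma chain_variation_le_grid_sum:
  fixes X Y :: "nat \<Rightarrow> real" and m :: "nat \<Rightarrow> nat \<Rightarrow> real \<times> real"
  assumes bv: "chain_variation_le g R K"
    and nodes: "\<And>i j. i \<le> N \<Longrightarrow> j \<le> N \<Longrightarrow> (X i, Y j) \<in> R"
    and m: "\<And>i j. i < N \<Longrightarrow> j < N \<Longrightarrow> m i j \<in> R \<and> X i \<le> fst (m i j) \<and> fst (m i j) \<le> X (Suc i)
      \<and> Y j \<le> snd (m i j) \<and> snd (m i j) \<le> Y (Suc j)"
  shows "(\<Sum>i<N. \<Sum>j<N. \<bar>g (m i j) - g (X i, Y j)\<bar>) \<le> 2 * N * K"
proof (rule sum_square_le_sum_diagonals)
  fix r assume r: "r < 2 * N"
  define lo where "lo = N - r"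
  define hi where "hi = min N (2 * N - r)"
  have "{i\<in>{..<N}. N \<le> i + r \<and> i + r < 2 * N} = {lo..<hi}"
    by (auto simp: lo_def hi_def)
  then have "(\<Sum>i<N. (if N \<le> i + r \<and> i + r < 2 * N then \<bar>g (m i (i + r - N)) - g (X i, Y (i + r - N))\<bar> else 0))
      = (\<Sum>i\<in>{lo..<hi}. \<bar>g (m i (i + r - N)) - g (X i, Y (i + r - N))\<bar>)"
    by (simp add: sum.inter_filter[symmetric])
  also have "\<dots> \<le> K"
  proof (rule chain_variation_le_staircase_sum[OF bv])
    show "lo \<le> hi" using r by (simp add: lo_def hi_def)
  next
    fix i assume "lo \<le> i" "i \<le> hi"
    then show "(X i, Y (i + r - N)) \<in> R" using r by (intro nodes) (auto simp: lo_def hi_def)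
  next
    fix i assume "lo \<le> i" "i < hi"
    then have ij: "i < N" "i + r - N < N" "Suc i + r - N = Suc (i + r - N)"
      using r by (auto simp: lo_def hi_def)
    show "m i (i + r - N) \<in> R" using m[OF ij(1,2)] by blast
    show "fst (X i, Y (i + r - N)) \<le> fst (m i (i + r - N)) \<and> snd (X i, Y (i + r - N)) \<le> snd (m i (i + r - N))"
      using m[OF ij(1,2)] by simp
    show "fst (m i (i + r - N)) \<le> fst (X (Suc i), Y (Suc i + r - N))
        \<and> snd (m i (i + r - N)) \<le> snd (X (Suc i), Y (Suc i + r - N))"
      using m[OF ij(1,2)] unfolding ij(3) by simp
  qed
  finally show "(\<Sum>i<N. (if N \<le> i + r \<and> i + r < 2 * N then \<bar>g (m i (i + r - N)) - g (X i, Y (i + r - N))\<bar> else 0))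
      \<le> K" .
qed simp

section \<open>Graphs of continuous functions of bounded variation\<close>

definition grid_node :: "real \<Rightarrow> real \<Rightarrow> nat \<Rightarrow> nat \<Rightarrow> real" where
  "grid_node p q N i = p + real i * ((q - p) / N)"

lemma grid_node_Suc: "grid_node p q N (Suc i) = grid_node p q N i + (q - p) / N"
  by (simp add: grid_node_def distrib_right add_divide_distrib)

lemma grid_node_mem:
  assumes "p \<le> q" "0 < N" "i \<le> N"
  shows "grid_node p q N i \<in> {p..q}"
proof -
  have "real i * ((q - p) / N) \<le> real N * ((q - p) / N)"
    using assms by (intro mult_right_mono) auto
  also have "real N * ((q - p) / N) = q - p" using assms by simp
  finally show ?thesis using assms by (simp add: grid_node_def)
qed

lemma exists_grid_interval:
  fixes p q x :: real and N :: nat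
  assumes "p \<le> x" "x \<le> q" "0 < N"
  shows "\<exists>i<N. x \<in> {grid_node p q N i..grid_node p q N (Suc i)}"
proof -
  define P where "P i \<longleftrightarrow> x \<le> grid_node p q N (Suc i)" for i
  have PN: "P (N - 1)" using assms by (simp add: P_def grid_node_def Suc_diff_1)
  define i where "i = (LEAST i. P i)"
  have Pi: "P i" unfolding i_def by (rule LeastI[of P "N - 1", OF PN])
  have iN: "i \<le> N - 1" unfolding i_def by (rule Least_le[of P "N - 1", OF PN])
  have lo: "grid_node p q N i \<le> x"
  proof (cases i)
    case 0 then show ?thesis using assms by (simp add: grid_node_def)
  next
    case (Suc k)
    then have "\<not> P k" using not_less_Least[of k P] by (simp add: i_def)
    then show ?thesis using Suc by (simp add: P_def)
  qed
  show ?thesis using Pi lo iN assms(3) by (intro exI[of _ i]) (simp add: P_def)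
qed

lemma graph_subset_grid_cells:
  fixes g :: "real \<times> real \<Rightarrow> real" and N :: nat
  assumes "0 < N"
  shows "{(x, y, g (x, y)) | x y. x \<in> {p..q} \<and> y \<in> {c..d}}
    \<subseteq> (\<Union>i<N. \<Union>j<N. {(x, y, g (x, y)) | x y.
        x \<in> {grid_node p q N i..grid_node p q N i + (q - p) / N}
        \<and> y \<in> {grid_node c d N j..grid_node c d N j + (d - c) / N}})"
proof
  fix t assume "t \<in> {(x, y, g (x, y)) | x y. x \<in> {p..q} \<and> y \<in> {c..d}}"
  then obtain x y where t: "t = (x, y, g (x, y))" "x \<in> {p..q}" "y \<in> {c..d}" by blast
  then obtain i j where "i < N" "x \<in> {grid_node p q N i..grid_node p q N i + (q - p) / N}"
      "j < N" "y \<in> {grid_node c d N j..grid_node c d N j + (d - c) / N}"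
    using exists_grid_interval[OF _ _ assms] unfolding grid_node_Suc by (metis atLeastAtMost_iff)
  then show "t \<in> (\<Union>i<N. \<Union>j<N. {(x, y, g (x, y)) | x y.
      x \<in> {grid_node p q N i..grid_node p q N i + (q - p) / N}
      \<and> y \<in> {grid_node c d N j..grid_node c d N j + (d - c) / N}})"
    using t(1) by blast
qed

lemma exists_farthest_points:
  fixes g :: "'a::topological_space \<Rightarrow> real"
  assumes "\<And>i j. i < N \<Longrightarrow> j < N \<Longrightarrow> compact (C i j) \<and> C i j \<noteq> {} \<and> continuous_on (C i j) g"
  shows "\<exists>m. \<forall>i<N. \<forall>j<N. m i j \<in> C i j \<and> (\<forall>z\<in>C i j. \<bar>g z - v i j\<bar> \<le> \<bar>g (m i j) - v i j\<bar>)"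
proof -
  define P where "P i j m \<longleftrightarrow> m \<in> C i j \<and> (\<forall>z\<in>C i j. \<bar>g z - v i j\<bar> \<le> \<bar>g m - v i j\<bar>)" for i j m
  have ex: "\<exists>m. P i j m" if "i < N" "j < N" for i j
  proof -
    have "continuous_on (C i j) (\<lambda>z. \<bar>g z - v i j\<bar>)"
      using assms[OF that] by (intro continuous_intros) auto
    from continuous_attains_sup[OF _ _ this] assms[OF that] show ?thesis
      unfolding P_def by blast
  qed
  have "P i j (SOME m. P i j m)" if "i < N" "j < N" for i j
    using ex[OF that] by (rule someI_ex)
  then have "\<exists>m. \<forall>i<N. \<forall>j<N. P i j (m i j)"
    by (intro exI[of _ "\<lambda>i j. SOME m. P i j m"]) simp
  then show ?thesis by (simp add: P_def)
qed

lemma exists_level: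
  fixes r M :: real and N :: nat
  assumes "0 \<le> r" "r \<le> M" "0 < N"
  shows "\<exists>k < nat \<lceil>M * N\<rceil> + 1. real k / N \<le> r \<and> r \<le> (real k + 1) / N"
proof -
  define k where "k = nat \<lfloor>r * N\<rfloor>"
  have rN: "0 \<le> r * N" using assms by simp
  have "r * N \<le> M * N" using assms by (simp add: mult_right_mono)
  then have "\<lfloor>r * N\<rfloor> \<le> \<lceil>M * N\<rceil>"
    by (meson ceiling_mono floor_le_ceiling order_trans)
  then have "k < nat \<lceil>M * N\<rceil> + 1"
    unfolding k_def by linarith
  moreover have "real k / N \<le> r" "r \<le> (real k + 1) / N"
    using rN assms by (simp_all add: k_def divide_le_eq le_divide_eq mult.commute)
  ultimately show ?thesis by blast
qed

lemma box_bounded_diameter_le: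
  fixes x0 y0 z0 w h t :: real
  assumes "0 \<le> w" "0 \<le> h" "0 \<le> t"
  shows "bounded ({x0..x0+w} \<times> {y0..y0+h} \<times> {z0..z0+t})"
    and "diameter ({x0..x0+w} \<times> {y0..y0+h} \<times> {z0..z0+t}) \<le> sqrt (w^2 + h^2 + t^2)"
proof -
  show "bounded ({x0..x0+w} \<times> {y0..y0+h} \<times> {z0..z0+t})"
    by (intro bounded_Times) auto
  show "diameter ({x0..x0+w} \<times> {y0..y0+h} \<times> {z0..z0+t}) \<le> sqrt (w^2 + h^2 + t^2)"
  proof (rule diameter_le)
    fix u v assume "u \<in> {x0..x0+w} \<times> {y0..y0+h} \<times> {z0..z0+t}" "v \<in> {x0..x0+w} \<times> {y0..y0+h} \<times> {z0..z0+t}"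
    then obtain u1 u2 u3 v1 v2 v3 where uv: "u = (u1, u2, u3)" "v = (v1, v2, v3)"
      "\<bar>u1 - v1\<bar> \<le> w" "\<bar>u2 - v2\<bar> \<le> h" "\<bar>u3 - v3\<bar> \<le> t"
      by (cases u, cases v) auto
    have "norm (u - v) = sqrt ((u1 - v1)^2 + (u2 - v2)^2 + (u3 - v3)^2)"
      using uv by (simp add: norm_Pair add.assoc)
    also have "\<dots> \<le> sqrt (w^2 + h^2 + t^2)"
      using uv(3-5) assms by (intro real_sqrt_le_mono add_mono) (simp_all flip: abs_le_square_iff)
    finally show "norm (u - v) \<le> sqrt (w^2 + h^2 + t^2)" .
  qed simp
qed

lemma graph_rectangle_cover:
  fixes g :: "real \<times> real \<Rightarrow> real" and v M :: real and N :: nat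
  assumes N: "0 < N" and osc: "\<And>z. z \<in> {xl..xu} \<times> {yl..yu} \<Longrightarrow> \<bar>g z - v\<bar> \<le> M"
  shows "{(x, y, g (x, y)) | x y. x \<in> {xl..xu} \<and> y \<in> {yl..yu}}
      \<subseteq> (\<Union>k<nat \<lceil>2 * M * N\<rceil> + 1. {xl..xu} \<times> {yl..yu} \<times> {v - M + k / N .. v - M + k / N + 1 / N})"
proof
  fix t assume "t \<in> {(x, y, g (x, y)) | x y. x \<in> {xl..xu} \<and> y \<in> {yl..yu}}"
  then obtain x y where t: "t = (x, y, g (x, y))" and xy: "x \<in> {xl..xu}" "y \<in> {yl..yu}" by blast
  then have "0 \<le> g (x, y) - v + M" "g (x, y) - v + M \<le> 2 * M"
    using osc[of "(x, y)"] by auto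
  then obtain k where "k < nat \<lceil>2 * M * N\<rceil> + 1" "real k / N \<le> g (x, y) - v + M"
      "g (x, y) - v + M \<le> real k / N + 1 / N"
    using exists_level[OF _ _ N, of "g (x, y) - v + M" "2 * M"] by (auto simp: add_divide_distrib)
  then show "t \<in> (\<Union>k<nat \<lceil>2 * M * N\<rceil> + 1. {xl..xu} \<times> {yl..yu} \<times> {v - M + k / N .. v - M + k / N + 1 / N})"
    using t xy by (intro UN_I[of k]) auto
qed

lemma sum_level_counts_le:
  fixes M :: "nat \<Rightarrow> nat \<Rightarrow> real"
  assumes M0: "\<And>i j. 0 \<le> M i j" and sumM: "(\<Sum>i<N. \<Sum>j<N. M i j) \<le> 2 * N * K"
  shows "(\<Sum>i<N. \<Sum>j<N. real (nat \<lceil>2 * M i j * N\<rceil> + 1)) \<le> (4 * K + 2) * real N ^ 2"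
proof -
  have "(\<Sum>i<N. \<Sum>j<N. real (nat \<lceil>2 * M i j * N\<rceil> + 1)) \<le> (\<Sum>i<N. \<Sum>j<N. 2 * N * M i j + 2)"
  proof (intro sum_mono)
    fix i j
    have "real (nat \<lceil>2 * M i j * N\<rceil>) = real_of_int \<lceil>2 * M i j * N\<rceil>"
      using M0[of i j] by simp
    also have "\<dots> \<le> 2 * M i j * N + 1" by linarith
    finally show "real (nat \<lceil>2 * M i j * N\<rceil> + 1) \<le> 2 * N * M i j + 2" by (simp add: algebra_simps)
  qed
  also have "\<dots> = 2 * N * (\<Sum>i<N. \<Sum>j<N. M i j) + 2 * real N ^ 2"
    by (simp add: sum.distrib sum_distrib_left power2_eq_square)
  also have "\<dots> \<le> 2 * N * (2 * N * K) + 2 * real N ^ 2"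
    using sumM by (intro add_right_mono mult_left_mono) auto
  also have "\<dots> = (4 * K + 2) * real N ^ 2" by (simp add: algebra_simps power2_eq_square)
  finally show ?thesis .
qed

lemma graph_grid_slab_cover:
  fixes g :: "real \<times> real \<Rightarrow> real" and M :: "nat \<Rightarrow> nat \<Rightarrow> real" and N :: nat
  assumes pq: "p \<le> q" and cd: "c \<le> d" and N: "0 < N"
    and osc: "\<And>i j z. i < N \<Longrightarrow> j < N \<Longrightarrow>
      z \<in> {grid_node p q N i..grid_node p q N i + (q - p) / N}
        \<times> {grid_node c d N j..grid_node c d N j + (d - c) / N} \<Longrightarrow>
      \<bar>g z - g (grid_node p q N i, grid_node c d N j)\<bar> \<le> M i j"
  shows "\<exists>F. finite F \<and> {(x, y, g (x, y)) | x y. x \<in> {p..q} \<and> y \<in> {c..d}} \<subseteq> \<Union>F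
      \<and> (\<forall>A\<in>F. bounded A \<and> diameter A \<le> sqrt ((q - p)^2 + (d - c)^2 + 1) / N)
      \<and> card F \<le> (\<Sum>i<N. \<Sum>j<N. nat \<lceil>2 * M i j * N\<rceil> + 1)"
proof -
  define w where "w = (q - p) / N"
  define h where "h = (d - c) / N"
  define X where "X = grid_node p q N"
  define Y where "Y = grid_node c d N"
  define box where "box i j k = {X i..X i + w} \<times> {Y j..Y j + h} \<times>
      {g (X i, Y j) - M i j + real k / N .. g (X i, Y j) - M i j + real k / N + 1 / N}" for i j k
  define I where "I = (SIGMA i:{..<N}. SIGMA j:{..<N}. {..<nat \<lceil>2 * M i j * N\<rceil> + 1})"
  define F where "F = (\<lambda>(i, j, k). box i j k) ` I"
  have "card F \<le> card I" unfolding F_def by (rule card_image_le) (simp add: I_def)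
  moreover have "finite F" unfolding F_def I_def by simp
  moreover have "\<forall>A\<in>F. bounded A \<and> diameter A \<le> sqrt ((q - p)^2 + (d - c)^2 + 1) / N"
  proof -
    have "w^2 + h^2 + (1 / N)^2 = ((q - p)^2 + (d - c)^2 + 1) / (real N)^2"
      by (simp add: w_def h_def power_divide add_divide_distrib)
    then have "sqrt (w^2 + h^2 + (1 / N)^2) = sqrt ((q - p)^2 + (d - c)^2 + 1) / N"
      by (simp add: real_sqrt_divide)
    moreover have "0 \<le> w" "0 \<le> h" using pq cd by (simp_all add: w_def h_def)
    ultimately show ?thesis
      using box_bounded_diameter_le[of w h "1 / N"] by (auto simp: F_def box_def)
  qed
  moreover have "{(x, y, g (x, y)) | x y. x \<in> {p..q} \<and> y \<in> {c..d}} \<subseteq> \<Union>F"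
  proof -
    have cell_cover: "{(x, y, g (x, y)) | x y. x \<in> {X i..X i + w} \<and> y \<in> {Y j..Y j + h}} \<subseteq> \<Union>F"
      if ij: "i < N" "j < N" for i j
    proof -
      have "{(x, y, g (x, y)) | x y. x \<in> {X i..X i + w} \<and> y \<in> {Y j..Y j + h}}
          \<subseteq> (\<Union>k<nat \<lceil>2 * M i j * N\<rceil> + 1. box i j k)"
        unfolding box_def using osc[OF ij] unfolding X_def Y_def w_def h_def
        by (rule graph_rectangle_cover[OF N])
      also have "\<dots> \<subseteq> \<Union>F" using ij by (auto simp: F_def I_def)
      finally show ?thesis .
    qed
    show ?thesis
      by (rule order_trans[OF graph_subset_grid_cells[OF N]], intro UN_least,
          rule cell_cover[unfolded X_def Y_def w_def h_def]) simp_all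
  qed
  ultimately show ?thesis by (intro exI[of _ F]) (auto simp: I_def)
qed

lemma graph_grid_cover:
  fixes g :: "real \<times> real \<Rightarrow> real" and N :: nat
  assumes pq: "p \<le> q" and cd: "c \<le> d" and N: "0 < N"
    and cont: "continuous_on ({p..q} \<times> {c..d}) g"
    and bv: "chain_variation_le g ({p..q} \<times> {c..d}) K"
  shows "\<exists>F. finite F \<and> {(x, y, g (x, y)) | x y. x \<in> {p..q} \<and> y \<in> {c..d}} \<subseteq> \<Union>F
      \<and> (\<forall>A\<in>F. bounded A \<and> diameter A \<le> sqrt ((q - p)^2 + (d - c)^2 + 1) / N)
      \<and> real (card F) \<le> (4 * K + 2) * real N ^ 2"
proof -
  define X where "X = grid_node p q N"
  define Y where "Y = grid_node c d N"
  define cell where "cell i j = {X i..X (Suc i)} \<times> {Y j..Y (Suc j)}" for i j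
  have nodes: "(X i, Y j) \<in> {p..q} \<times> {c..d}" if "i \<le> N" "j \<le> N" for i j
    using grid_node_mem[OF pq N] grid_node_mem[OF cd N] that by (simp add: X_def Y_def)
  have cell_sub: "cell i j \<subseteq> {p..q} \<times> {c..d}" if "i < N" "j < N" for i j
    using nodes[of i j] nodes[of "Suc i" "Suc j"] that by (auto simp: cell_def)
  have "compact (cell i j) \<and> cell i j \<noteq> {} \<and> continuous_on (cell i j) g" if "i < N" "j < N" for i j
    using pq cd N continuous_on_subset[OF cont cell_sub[OF that]]
    by (auto simp: cell_def compact_Times X_def Y_def grid_node_Suc)
  then obtain m where m: "\<And>i j. i < N \<Longrightarrow> j < N \<Longrightarrow> m i j \<in> cell i j
      \<and> (\<forall>z\<in>cell i j. \<bar>g z - g (X i, Y j)\<bar> \<le> \<bar>g (m i j) - g (X i, Y j)\<bar>)"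
    using exists_farthest_points[of N cell g "\<lambda>i j. g (X i, Y j)"] by blast
  define M where "M i j = \<bar>g (m i j) - g (X i, Y j)\<bar>" for i j
  have "(\<Sum>i<N. \<Sum>j<N. M i j) \<le> 2 * N * K"
    unfolding M_def
  proof (rule chain_variation_le_grid_sum[OF bv nodes])
    fix i j assume ij: "i < N" "j < N"
    then have "m i j \<in> cell i j" using m by blast
    then show "m i j \<in> {p..q} \<times> {c..d} \<and> X i \<le> fst (m i j) \<and> fst (m i j) \<le> X (Suc i)
        \<and> Y j \<le> snd (m i j) \<and> snd (m i j) \<le> Y (Suc j)"
      using cell_sub[OF ij] by (auto simp: cell_def)
  qed
  then have count: "real (\<Sum>i<N. \<Sum>j<N. nat \<lceil>2 * M i j * N\<rceil> + 1) \<le> (4 * K + 2) * real N ^ 2"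
    using sum_level_counts_le[of M N K] by (simp add: M_def)
  have "\<exists>F. finite F \<and> {(x, y, g (x, y)) | x y. x \<in> {p..q} \<and> y \<in> {c..d}} \<subseteq> \<Union>F
      \<and> (\<forall>A\<in>F. bounded A \<and> diameter A \<le> sqrt ((q - p)^2 + (d - c)^2 + 1) / N)
      \<and> card F \<le> (\<Sum>i<N. \<Sum>j<N. nat \<lceil>2 * M i j * N\<rceil> + 1)"
    using m by (intro graph_grid_slab_cover[OF pq cd N])
      (auto simp: M_def cell_def X_def Y_def grid_node_Suc)
  then show ?thesis using count by (meson of_nat_mono order_trans)
qed
lemma exists_fine_grid:
  fixes B D \<delta> e s :: real
  assumes "0 \<le> B" "0 < D" "0 < \<delta>" "0 < e" "2 < s"
  shows "\<exists>N::nat. 0 < N \<and> D / N \<le> \<delta> \<and> B * real N ^ 2 * (D / N) powr s \<le> e"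
proof -
  define X where "X = B * D powr s / e"
  have X0: "0 \<le> X" using assms by (simp add: X_def)
  obtain N :: nat where N: "max (D / \<delta>) ((X + 1) powr (1 / (s - 2))) < N"
    using reals_Archimedean2 by blast
  have Npos: "0 < real N" using N assms by (smt (verit) divide_pos_pos)
  have "D / \<delta> < N" using N by simp
  then have "D / N \<le> \<delta>" using assms Npos by (simp add: field_simps)
  moreover have "B * real N ^ 2 * (D / N) powr s \<le> e"
  proof -
    have "(X + 1) powr (1 / (s - 2)) < N" using N by simp
    then have "((X + 1) powr (1 / (s - 2))) powr (s - 2) < real N powr (s - 2)"
      by (intro powr_less_mono2) (use assms X0 in auto)
    then have XN: "X + 1 < real N powr (s - 2)"
      using assms X0 by (simp add: powr_powr)
    have "B * real N ^ 2 * (D / N) powr s = B * D powr s * (real N powr 2 / real N powr s)"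
      using Npos assms by (simp add: powr_divide powr_realpow)
    also have "\<dots> = X * e / real N powr (s - 2)"
      using Npos assms by (simp add: X_def powr_diff)
    also have "\<dots> \<le> e"
    proof -
      have "X * e \<le> e * real N powr (s - 2)"
        using XN assms X0 by (smt (verit) mult.commute mult_right_mono)
      then show ?thesis using Npos by (simp add: divide_le_eq)
    qed
    finally show ?thesis .
  qed
  ultimately show ?thesis using Npos by (intro exI[of _ N]) simp
qed

lemma graph_hausdorff_null:
  fixes g :: "real \<times> real \<Rightarrow> real"
  assumes pq: "p \<le> q" and cd: "c \<le> d" and cont: "continuous_on ({p..q} \<times> {c..d}) g"
    and bv: "chain_variation_le g ({p..q} \<times> {c..d}) K" and s: "2 < s"
  shows "hausdorff_null s {(x, y, g (x, y)) | x y. x \<in> {p..q} \<and> y \<in> {c..d}}"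
proof (rule hausdorff_null_finite_coverI)
  fix \<delta> e :: real assume "0 < \<delta>" "0 < e"
  define D where "D = sqrt ((q - p)^2 + (d - c)^2 + 1)"
  have "0 \<le> K" using chain_variation_le_nonneg[OF bv] pq cd by simp
  moreover have "0 < D" unfolding D_def by (intro real_sqrt_gt_zero add_nonneg_pos) auto
  ultimately obtain N :: nat where N: "0 < N" "D / N \<le> \<delta>" "(4 * K + 2) * real N ^ 2 * (D / N) powr s \<le> e"
    using exists_fine_grid[of "4 * K + 2" D \<delta> e s] \<open>0 < \<delta>\<close> \<open>0 < e\<close> s by auto
  obtain F where F: "finite F" "{(x, y, g (x, y)) | x y. x \<in> {p..q} \<and> y \<in> {c..d}} \<subseteq> \<Union>F"
      "\<forall>A\<in>F. bounded A \<and> diameter A \<le> D / N" "real (card F) \<le> (4 * K + 2) * real N ^ 2"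
    using graph_grid_cover[OF pq cd N(1) cont bv, folded D_def] by (elim exE conjE) (rule that)
  have "(\<Sum>A\<in>F. diameter A powr s) \<le> real (card F) * (D / N) powr s"
    by (rule sum_bounded_above) (use F(3) s in \<open>auto intro!: powr_mono2 diameter_ge_0\<close>)
  also have "\<dots> \<le> (4 * K + 2) * real N ^ 2 * (D / N) powr s"
    using F(4) by (intro mult_right_mono) auto
  also have "\<dots> \<le> e" by (rule N(3))
  finally have "(\<Sum>A\<in>F. diameter A powr s) \<le> e" .
  moreover have "\<forall>A\<in>F. bounded A \<and> diameter A \<le> \<delta>" using F(3) N(2) by fastforce
  ultimately show "\<exists>F. finite F \<and> {(x, y, g (x, y)) | x y. x \<in> {p..q} \<and> y \<in> {c..d}} \<subseteq> \<Union>F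
      \<and> (\<forall>A\<in>F. bounded A \<and> diameter A \<le> \<delta>) \<and> (\<Sum>A\<in>F. diameter A powr s) \<le> e"
    using F(1,2) by blast
qed

section \<open>Sets whose shadow is a rectangle\<close>

lemma planar_shadow_measure_le:
  fixes U :: "(real \<times> real \<times> real) set"
  assumes U: "bounded U" "diameter U \<le> 1" and s: "s \<le> 2"
  shows "\<exists>B\<in>sets lborel. (\<lambda>(x, y, z). (x, y)) ` U \<subseteq> B
      \<and> emeasure lborel B \<le> ennreal (4 * diameter U powr s)"
proof (cases "U = {}")
  case True
  then show ?thesis by (intro bexI[of _ "{}"]) auto
next
  case False
  then obtain u where u: "u \<in> U" by blast
  define r where "r = diameter U"
  define B where "B = cbox (fst u - r, fst (snd u) - r) (fst u + r, fst (snd u) + r)"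
  have r0: "0 \<le> r" by (simp add: r_def diameter_ge_0 U)
  have "(\<lambda>(x, y, z). (x, y)) ` U \<subseteq> B"
  proof
    fix t assume "t \<in> (\<lambda>(x, y, z). (x, y)) ` U"
    then obtain x y z where t: "t = (x, y)" "(x, y, z) \<in> U" by auto
    have "dist (x, y, z) u \<le> r"
      unfolding r_def using U(1) t(2) u by (intro diameter_bounded_bound)
    then have "dist x (fst u) \<le> r" "dist y (fst (snd u)) \<le> r"
      using dist_fst_le[of "(x, y, z)" u] dist_fst_le[of "(y, z)" "snd u"]
        dist_snd_le[of "(x, y, z)" u] by simp_all
    then show "t \<in> B" using t by (auto simp: B_def cbox_Pair_iff dist_real_def abs_le_iff)
  qed
  moreover have "emeasure lborel B \<le> ennreal (4 * r powr s)"
  proof -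
    have "r * r \<le> r powr s"
    proof (cases "r = 0")
      case False
      then have "r * r = r powr 2" using r0 by (simp add: powr_realpow power2_eq_square)
      also have "\<dots> \<le> r powr s" using r0 U(2) s by (intro powr_mono') (auto simp: r_def)
      finally show ?thesis .
    qed simp
    then show ?thesis
      using r0 by (simp add: B_def emeasure_lborel_cbox_eq Basis_prod_def algebra_simps ennreal_leI)
  qed
  moreover have "B \<in> sets lborel" by (simp add: B_def)
  ultimately show ?thesis unfolding r_def by blast
qed

lemma shadow_area_le_cover_sum:
  fixes U :: "nat \<Rightarrow> (real \<times> real \<times> real) set"
  assumes ab: "a \<le> b" and cd: "c \<le> d" and s: "s \<le> 2"
    and U: "\<forall>i. bounded (U i) \<and> diameter (U i) \<le> 1"
    and shadow: "{a..b} \<times> {c..d} \<subseteq> (\<lambda>(x, y, z). (x, y)) ` (\<Union>i. U i)"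
  shows "ennreal ((b - a) * (d - c)) \<le> 4 * (\<Sum>i. ennreal (diameter (U i) powr s))"
proof -
  have "\<forall>i. \<exists>B. B \<in> sets lborel \<and> (\<lambda>(x, y, z). (x, y)) ` U i \<subseteq> B
      \<and> emeasure lborel B \<le> ennreal (4 * diameter (U i) powr s)"
    using planar_shadow_measure_le[OF _ _ s] U by (simp add: Bex_def)
  then obtain B where B: "\<And>i. B i \<in> sets lborel" "\<And>i. (\<lambda>(x, y, z). (x, y)) ` U i \<subseteq> B i"
      "\<And>i. emeasure lborel (B i) \<le> ennreal (4 * diameter (U i) powr s)"
    by (auto dest!: choice)
  have "cbox (a, c) (b, d) \<subseteq> (\<Union>i. B i)"
    using shadow B(2) unfolding cbox_Pair_eq unfolding cbox_interval by blast
  then have "ennreal ((b - a) * (d - c)) \<le> emeasure lborel (\<Union>i. B i)"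
    using ab cd B(1) emeasure_mono[of "cbox (a, c) (b, d)" "\<Union>i. B i" lborel]
    by (simp add: emeasure_lborel_cbox_eq Basis_prod_def mult.commute)
  also have "\<dots> \<le> (\<Sum>i. emeasure lborel (B i))"
    using B(1) by (intro emeasure_subadditive_countably) auto
  also have "\<dots> \<le> (\<Sum>i. ennreal 4 * ennreal (diameter (U i) powr s))"
    using B(3) by (intro suminf_le summableI) (simp add: ennreal_mult)
  also have "\<dots> = ennreal 4 * (\<Sum>i. ennreal (diameter (U i) powr s))"
    by (rule ennreal_suminf_cmult)
  finally show ?thesis by simp
qed

lemma hausdorff_measure_ne_0_if_shadow_rectangle:
  fixes G :: "(real \<times> real \<times> real) set"
  assumes ab: "a < b" and cd: "c < d" and s: "s \<le> 2"
    and shadow: "{a..b} \<times> {c..d} \<subseteq> (\<lambda>(x, y, z). (x, y)) ` G"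
  shows "hausdorff_measure s G \<noteq> 0"
proof -
  define A where "A = (b - a) * (d - c)"
  have A0: "0 < A" using ab cd by (simp add: A_def)
  have "ennreal (A / 4) \<le> (\<Sum>i. ennreal (diameter (U i) powr s))"
    if "\<forall>i. bounded (U i) \<and> diameter (U i) \<le> 1" "G \<subseteq> (\<Union>i. U i)" for U
  proof -
    have "ennreal 4 * ennreal (A / 4) = ennreal A"
      using A0 by (subst ennreal_mult[symmetric]) auto
    also have "\<dots> \<le> ennreal 4 * (\<Sum>i. ennreal (diameter (U i) powr s))"
      unfolding A_def using shadow_area_le_cover_sum[OF _ _ s that(1)] shadow that(2) ab cd
      by (simp add: image_mono order_trans)
    finally show ?thesis by (subst (asm) ennreal_mult_le_mult_iff) auto
  qed
  then have "ennreal (A / 4) \<le> (INF U\<in>{U :: nat \<Rightarrow> (real \<times> real \<times> real) set.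
         (\<forall>i. bounded (U i) \<and> diameter (U i) \<le> 1) \<and> G \<subseteq> (\<Union>i. U i)}.
        (\<Sum>i. ennreal (diameter (U i) powr s)))"
    by (intro INF_greatest) blast
  also have "\<dots> \<le> hausdorff_measure s G"
    unfolding hausdorff_measure_def by (rule SUP_upper2[of 1]) auto
  finally show ?thesis using A0 by auto
qed

section \<open>The function \<open>T\<close>\<close>

lemma seq_a_closed_form: "seq_a a b n = b - (b - a) / 2 ^ n"
proof -
  have sum: "(\<Sum>k=1..n. 1 / 2 ^ k :: real) = 1 - 1 / 2 ^ n"
    by (induction n) (simp_all add: field_simps)
  show ?thesis unfolding seq_a_def sum by (simp add: algebra_simps)
qed

lemma seq_a_0 [simp]: "seq_a a b 0 = a"
  by (simp add: seq_a_def)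

lemma seq_a_less: "a < b \<Longrightarrow> seq_a a b n < b"
  by (simp add: seq_a_closed_form)

lemma seq_a_mono: "a < b \<Longrightarrow> m \<le> n \<Longrightarrow> seq_a a b m \<le> seq_a a b n"
  by (simp add: seq_a_closed_form divide_left_mono power_increasing)

lemma seq_a_exceeds: "a < b \<Longrightarrow> x < b \<Longrightarrow> \<exists>n. x < seq_a a b n"
proof -
  assume ab: "a < b" and xb: "x < b"
  obtain n where "(1/2::real) ^ n < (b - x) / (b - a)"
    using real_arch_pow_inv[of "(b - x) / (b - a)" "1/2"] ab xb by auto
  then have "(b - a) / 2 ^ n < b - x" using ab by (simp add: power_one_over field_simps)
  then have "x < seq_a a b n" by (simp add: seq_a_closed_form)
  then show ?thesis ..
qed

lemma psi_eq:
  assumes "a < b" "1 \<le> n"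
  shows "psi a b n x = a + 2 ^ (n - 1) * (x - seq_a a b (n - 1))"
proof -
  obtain m where n: "n = Suc m" using assms by (cases n) auto
  show ?thesis unfolding psi_def n seq_a_closed_form using assms by (simp add: field_simps)
qed

lemma psi_right_end:
  assumes "a < b" "1 \<le> n"
  shows "psi a b n (seq_a a b n) = seq_a a b 1"
proof -
  obtain m where n: "n = Suc m" using assms by (cases n) auto
  have "psi a b n (seq_a a b n) = a + 2 ^ (n - 1) * (seq_a a b n - seq_a a b (n - 1))"
    by (rule psi_eq[OF assms])
  also have "\<dots> = seq_a a b 1"
    using assms unfolding n by (simp add: seq_a_closed_form field_simps)
  finally show ?thesis .
qed

lemma psi_mem:
  assumes ab: "a < b" and n: "1 \<le> n" and x: "x \<in> {seq_a a b (n - 1)..seq_a a b n}"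
  shows "psi a b n x \<in> {a..seq_a a b 1}"
proof -
  have "2 ^ (n - 1) * (x - seq_a a b (n - 1)) \<le> 2 ^ (n - 1) * (seq_a a b n - seq_a a b (n - 1))"
    using x by (intro mult_left_mono) auto
  moreover have "0 \<le> 2 ^ (n - 1) * (x - seq_a a b (n - 1))" using x by simp
  ultimately show ?thesis
    using psi_right_end[OF ab n] unfolding psi_eq[OF ab n] atLeastAtMost_iff by linarith
qed

lemma Fn_eq:
  assumes "a < b" "1 \<le> n"
  shows "Fn a b \<phi> n x y = 1 / real n * \<phi> (psi a b n x) y + (real n - 1) / real n * \<phi> a y"
  using psi_eq[OF assms, of x] by (simp add: Fn_def)

lemma Fn_continuous_variation:
  assumes ab: "a < b" and n: "1 \<le> n"
    and cont: "continuous_on ({a..seq_a a b 1} \<times> {c..d}) (\<lambda>(x, y). \<phi> x y)"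
    and bv: "chain_variation_le (\<lambda>(x, y). \<phi> x y) ({a..seq_a a b 1} \<times> {c..d}) K"
  shows "continuous_on ({seq_a a b (n - 1)..seq_a a b n} \<times> {c..d}) (\<lambda>(x, y). Fn a b \<phi> n x y)"
    and "chain_variation_le (\<lambda>(x, y). Fn a b \<phi> n x y) ({seq_a a b (n - 1)..seq_a a b n} \<times> {c..d}) K"
proof -
  define f where "f = (\<lambda>(x, y). \<phi> x y)"
  define S where "S = {seq_a a b (n - 1)..seq_a a b n} \<times> {c..d}"
  define R where "R = {a..seq_a a b 1} \<times> {c..d}"
  define h1 :: "real \<times> real \<Rightarrow> real \<times> real" where "h1 z = (psi a b n (fst z), snd z)" for z
  define h0 :: "real \<times> real \<Rightarrow> real \<times> real" where "h0 z = (a, snd z)" for z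
  have psi: "psi a b n x = a + 2 ^ (n - 1) * (x - seq_a a b (n - 1))" for x
    by (rule psi_eq[OF ab n])
  have h1S: "h1 ` S \<subseteq> R" using psi_mem[OF ab n] by (auto simp: S_def R_def h1_def)
  have h0S: "h0 ` S \<subseteq> R" using seq_a_mono[OF ab, of 0 1] by (auto simp: S_def R_def h0_def)
  have lin: "(\<lambda>(x, y). Fn a b \<phi> n x y) = (\<lambda>z. 1 / real n * (f \<circ> h1) z + (real n - 1) / real n * (f \<circ> h0) z)"
    by (auto simp: Fn_eq[OF ab n] f_def h1_def h0_def)
  have "continuous_on S (f \<circ> h1)"
    using h1S unfolding h1_def psi
    by (intro continuous_on_compose continuous_on_subset[OF cont[folded f_def R_def]] continuous_intros)
  moreover have "continuous_on S (f \<circ> h0)"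
    using h0S unfolding h0_def
    by (intro continuous_on_compose continuous_on_subset[OF cont[folded f_def R_def]] continuous_intros)
  ultimately show "continuous_on S (\<lambda>(x, y). Fn a b \<phi> n x y)"
    unfolding lin by (intro continuous_on_add continuous_on_mult_left)
  have "chain_variation_le (f \<circ> h1) S K"
    using h1S by (intro chain_variation_le_compose[OF bv[folded f_def R_def]])
      (auto simp: h1_def psi S_def mult_left_mono)
  moreover have "chain_variation_le (f \<circ> h0) S K"
    using h0S by (intro chain_variation_le_compose[OF bv[folded f_def R_def]]) (auto simp: h0_def)
  ultimately have "chain_variation_le (\<lambda>(x, y). Fn a b \<phi> n x y) S
      (1 / real n * K + (real n - 1) / real n * K)"
    unfolding lin using n by (intro chain_variation_le_lincomb) (simp_all add: comp_def)
  also have "1 / real n * K + (real n - 1) / real n * K = K"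
    using n by (simp add: field_simps)
  finally show "chain_variation_le (\<lambda>(x, y). Fn a b \<phi> n x y) S K" .
qed

lemma Tlim_eq_Fn:
  assumes ab: "a < b" and x: "a \<le> x" "x < b"
  shows "\<exists>k\<ge>1. seq_a a b (k - 1) \<le> x \<and> x \<le> seq_a a b k \<and> Tlim a b \<phi> x y = Fn a b \<phi> k x y"
proof -
  obtain n where n: "x < seq_a a b n" using seq_a_exceeds[OF ab x(2)] by blast
  define P where "P k \<longleftrightarrow> 1 \<le> k \<and> x \<le> seq_a a b k" for k
  have Pn: "P n" using n x by (cases n) (auto simp: P_def)
  define k where "k = (LEAST k. P k)"
  have Pk: "P k" unfolding k_def by (rule LeastI[of P n, OF Pn])
  have lo: "seq_a a b (k - 1) \<le> x"
  proof (cases "k = 1")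
    case True then show ?thesis using x by simp
  next
    case False
    then have "k - 1 < k" "1 \<le> k - 1" using Pk by (auto simp: P_def)
    then have "\<not> P (k - 1)" unfolding k_def using not_less_Least by blast
    then show ?thesis using \<open>1 \<le> k - 1\<close> by (simp add: P_def)
  qed
  \<comment> \<open>\<open>T\<^sub>m\<close> agrees with \<open>F\<^sub>k\<close> at \<open>x\<close> as soon as \<open>x < a\<^sub>m\<close>, so the limit is attained.\<close>
  have "\<forall>\<^sub>F m in sequentially. Tn a b \<phi> m x y = Fn a b \<phi> k x y"
  proof (rule eventually_sequentiallyI[of n])
    fix m assume "n \<le> m"
    then have "x < seq_a a b m" using n seq_a_mono[OF ab, of n m] by linarith
    then show "Tn a b \<phi> m x y = Fn a b \<phi> k x y"
      unfolding Tn_def k_def P_def by simp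
  qed
  then have "Tlim a b \<phi> x y = Fn a b \<phi> k x y"
    unfolding Tlim_def by (intro limI tendsto_eventually)
  then show ?thesis using Pk lo by (auto simp: P_def)
qed

lemma Tlim_right_end:
  assumes ab: "a < b" and per: "\<phi> a y = \<phi> (seq_a a b 1) y"
  shows "Tlim a b \<phi> b y = \<phi> a y"
proof -
  have "\<forall>\<^sub>F m in sequentially. Tn a b \<phi> m b y = \<phi> a y"
  proof (rule eventually_sequentiallyI[of 1])
    fix m :: nat assume m: "1 \<le> m"
    have "Tn a b \<phi> m b y = Fn a b \<phi> m (seq_a a b m) y"
      using seq_a_less[OF ab, of m] by (simp add: Tn_def)
    also have "\<dots> = \<phi> a y"
      using m per by (simp add: Fn_eq[OF ab m] psi_right_end[OF ab m] field_simps)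
    finally show "Tn a b \<phi> m b y = \<phi> a y" .
  qed
  then show ?thesis
    unfolding Tlim_def by (intro limI tendsto_eventually)
qed

lemma graph_T_subset_pieces:
  assumes ab: "a < b" and per: "\<forall>y\<in>{c..d}. \<phi> a y = \<phi> (seq_a a b 1) y"
  shows "graph_T a b c d \<phi> \<subseteq> {(x, y, \<phi> a y) | x y. x \<in> {b..b} \<and> y \<in> {c..d}}
      \<union> (\<Union>n. {(x, y, Fn a b \<phi> (Suc n) x y) | x y. x \<in> {seq_a a b n..seq_a a b (Suc n)} \<and> y \<in> {c..d}})"
proof
  fix t assume "t \<in> graph_T a b c d \<phi>"
  then obtain x y where t: "t = (x, y, Tlim a b \<phi> x y)" and x: "x \<in> {a..b}" and y: "y \<in> {c..d}"
    unfolding graph_T_def by blast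
  show "t \<in> {(x, y, \<phi> a y) | x y. x \<in> {b..b} \<and> y \<in> {c..d}}
      \<union> (\<Union>n. {(x, y, Fn a b \<phi> (Suc n) x y) | x y. x \<in> {seq_a a b n..seq_a a b (Suc n)} \<and> y \<in> {c..d}})"
  proof (cases "x = b")
    case True
    then show ?thesis using t y Tlim_right_end[OF ab] per by auto
  next
    case False
    then obtain k where "1 \<le> k" "seq_a a b (k - 1) \<le> x" "x \<le> seq_a a b k"
        "Tlim a b \<phi> x y = Fn a b \<phi> k x y"
      using Tlim_eq_Fn[OF ab, of x \<phi> y] x by auto
    then show ?thesis using t y by (intro UnI2 UN_I[of "k - 1"]) auto
  qed
qed

lemma graph_T_hausdorff_null:
  assumes ab: "a < b" and cd: "c \<le> d"
    and cont: "continuous_on ({a..seq_a a b 1} \<times> {c..d}) (\<lambda>(x, y). \<phi> x y)"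
    and per: "\<forall>y\<in>{c..d}. \<phi> a y = \<phi> (seq_a a b 1) y"
    and bv: "chain_variation_le (\<lambda>(x, y). \<phi> x y) ({a..seq_a a b 1} \<times> {c..d}) K"
    and s: "2 < s"
  shows "hausdorff_null s (graph_T a b c d \<phi>)"
proof (rule hausdorff_null_subset[OF hausdorff_null_Un[OF _ hausdorff_null_UN] graph_T_subset_pieces[OF ab per]])
  define f where "f = (\<lambda>(x, y). \<phi> x y)"
  define h0 :: "real \<times> real \<Rightarrow> real \<times> real" where "h0 z = (a, snd z)" for z
  have maps: "h0 ` ({b..b} \<times> {c..d}) \<subseteq> {a..seq_a a b 1} \<times> {c..d}"
    using seq_a_mono[OF ab, of 0 1] by (auto simp: h0_def)
  have "continuous_on ({b..b} \<times> {c..d}) (f \<circ> h0)"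
    by (rule continuous_on_compose[OF _ continuous_on_subset[OF cont[folded f_def] maps]])
      (simp add: h0_def continuous_intros)
  moreover have "chain_variation_le (f \<circ> h0) ({b..b} \<times> {c..d}) K"
    by (rule chain_variation_le_compose[OF bv[folded f_def] maps]) (simp add: h0_def)
  ultimately show "hausdorff_null s {(x, y, \<phi> a y) | x y. x \<in> {b..b} \<and> y \<in> {c..d}}"
    using graph_hausdorff_null[OF _ cd _ _ s, of b b "f \<circ> h0" K] by (simp add: f_def h0_def)
  show "hausdorff_null s {(x, y, Fn a b \<phi> (Suc n) x y) | x y. x \<in> {seq_a a b n..seq_a a b (Suc n)} \<and> y \<in> {c..d}}"
    for n
    using graph_hausdorff_null[OF _ cd _ _ s, of "seq_a a b n" "seq_a a b (Suc n)" "\<lambda>(x, y). Fn a b \<phi> (Suc n) x y" K]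
      Fn_continuous_variation[OF ab _ cont bv, of "Suc n"] seq_a_mono[OF ab, of n "Suc n"]
    by simp
qed

theorem mainTheorem11:
  fixes a b c d :: real and \<phi> :: "real \<Rightarrow> real \<Rightarrow> real"
  assumes "a < b" and "c < d"
    and "continuous_on ({seq_a a b 0..seq_a a b 1} \<times> {c..d}) (\<lambda>(x, y). \<phi> x y)"
    and "\<forall>y\<in>{c..d}. \<phi> (seq_a a b 0) y = \<phi> (seq_a a b 1) y"
    and "arzela_bv \<phi> (seq_a a b 0) (seq_a a b 1) c d"
  shows "hausdorff_dim (graph_T a b c d \<phi>) = 2"
proof (rule hausdorff_dim_eqI)
  obtain K where bv: "chain_variation_le (\<lambda>(x, y). \<phi> x y) ({a..seq_a a b 1} \<times> {c..d}) K"
    using arzela_bv_imp_chain_variation_le[OF assms(5)] by auto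
  show "hausdorff_measure s (graph_T a b c d \<phi>) = 0" if "2 < s" for s
    using graph_T_hausdorff_null[OF assms(1) _ _ _ bv that] assms(2-4)
    by (simp add: hausdorff_null_imp_measure_eq_0)
  show "hausdorff_measure s (graph_T a b c d \<phi>) \<noteq> 0" if "0 < s" "s < 2" for s
  proof (rule hausdorff_measure_ne_0_if_shadow_rectangle[OF assms(1,2)])
    show "{a..b} \<times> {c..d} \<subseteq> (\<lambda>(x, y, z). (x, y)) ` graph_T a b c d \<phi>"
      unfolding graph_T_def by force
  qed (use that in simp)
qed simp

end
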